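(* Consider the system $\dot x=-\nabla\psi(x)+Jx+Bu$, $y=Cx+\rho(u)$ on $\mathbb R^n$, where $\psi:\mathbb R^n\to\mathbb R$ is continuously differentiable and strictly convex with $\lim_{\|x\|\to\infty}\psi(x)/\|x\|=\infty$, $J$ is skew-symmetric, $B,C\in\mathbb R^{n\times n}$ are invertible, and $\rho:\mathbb R^n\to\mathbb R^n$. Let $\Phi:\mathbb R^n\to\mathbb R^n$ be the inverse of the map $y\mapsto B^{-1}\nabla\psi(C^{-1}y)-B^{-1}JC^{-1}y$. If $\Phi+\rho$ is the gradient of a (differentiable) convex function, then the steady-state input-output relation of the system is cyclically monotone; if $\Phi+\rho$ is the gradient of a strictly convex function, then the steady-state input-output relation is strictly cyclically monotone.
   Context: The steady-state input-output relation of the system is the set of pairs $(\mathrm u,\mathrm y)\in\mathbb R^n\times\mathbb R^n$ such that there is $\mathrm x$ with $-\nabla\psi(\mathrm x)+J\mathrm x+B\mathrm u=0$ and $\mathrm y=C\mathrm x+\rho(\mathrm u)$. (Under the hypotheses the map $x\mapsto\nabla\psi(x)-Jx$ is a bijection of $\mathbb R^n$, so $\Phi$ is well defined.) A relation $R\subseteq\mathbb R^n\times\mathbb R^n$ is cyclically monotone if for every $N\ge1$ and $(u_1,y_1),\dots,(u_N,y_N)\in R$, $\sum_{i=1}^Ny_i^T(u_i-u_{i-1})\ge0$ with $u_0=u_N$; strictly cyclically monotone if this inequality is strict whenever at least two of the $u_i$ are distinct. *)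

theory Defs
  imports "HOL-Analysis.Analysis"
begin

definition strictly_convex_on :: "'a::real_vector set \<Rightarrow> ('a \<Rightarrow> real) \<Rightarrow> bool" where
  "strictly_convex_on S f \<longleftrightarrow> convex S \<and>
    (\<forall>x\<in>S. \<forall>y\<in>S. \<forall>t. x \<noteq> y \<and> 0 < t \<and> t < 1 \<longrightarrow>
       f ((1 - t) *\<^sub>R x + t *\<^sub>R y) < (1 - t) * f x + t * f y)"

definition cyc_sum :: "nat \<Rightarrow> (nat \<Rightarrow> 'a::real_inner) \<Rightarrow> (nat \<Rightarrow> 'a) \<Rightarrow> real" where
  "cyc_sum N u y = (\<Sum>i=1..N. y i \<bullet> (u i - u (if i = 1 then N else i - 1)))"

definition cyclically_monotone :: "('a::real_inner \<times> 'a) set \<Rightarrow> bool" where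
  "cyclically_monotone R \<longleftrightarrow>
    (\<forall>N\<ge>1. \<forall>u y. (\<forall>i\<in>{1..N}. (u i, y i) \<in> R) \<longrightarrow> cyc_sum N u y \<ge> 0)"

definition strictly_cyclically_monotone :: "('a::real_inner \<times> 'a) set \<Rightarrow> bool" where
  "strictly_cyclically_monotone R \<longleftrightarrow>
    (\<forall>N\<ge>1. \<forall>u y. (\<forall>i\<in>{1..N}. (u i, y i) \<in> R) \<longrightarrow>
       (\<exists>i\<in>{1..N}. \<exists>j\<in>{1..N}. u i \<noteq> u j) \<longrightarrow> cyc_sum N u y > 0)"

text \<open>Steady-state input-output relation of
  x' = -grad psi x + J x + B u, y = C x + rho u  (gpsi = grad psi).\<close>
definition steady_state_io ::
  "(real^'n \<Rightarrow> real^'n) \<Rightarrow> real^'n^'n \<Rightarrow> real^'n^'n \<Rightarrow> real^'n^'n \<Rightarrow> (real^'n \<Rightarrow> real^'n)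
   \<Rightarrow> ((real^'n) \<times> (real^'n)) set" where
  "steady_state_io gpsi J B C rho =
     {(u, y). \<exists>x. - gpsi x + J *v x + B *v u = 0 \<and> y = C *v x + rho u}"

end

theory Submission
  imports Defs
begin

text \<open>At a steady state with input u and state x we have \<open>\<nabla>\<psi> x - J x = B u\<close>, so the
  map whose inverse is \<open>\<Phi>\<close> sends \<open>C x\<close> to u. Strict convexity of \<open>\<psi>\<close> makes \<open>\<nabla>\<psi>\<close> strictly
  monotone, and subtracting the skew map J preserves this because \<open>(J w) \<bullet> w = 0\<close>; hence that
  map is injective and every steady-state pair satisfies \<open>y = \<Phi> u + \<rho> u\<close>. The relation is
  therefore contained in the graph of the gradient of a convex function F, and summing the
  gradient inequalities \<open>F u\<^sub>i - F u\<^sub>i\<^sub>-\<^sub>1 \<le> y\<^sub>i \<bullet> (u\<^sub>i - u\<^sub>i\<^sub>-\<^sub>1)\<close> around the cycle, where the left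
  sides telescope to 0, gives cyclic monotonicity (strict if some inequality is strict).\<close>

lemma matrix_inv_mult_both:
  fixes A :: "real^'n^'n"
  assumes "invertible A"
  shows "A ** matrix_inv A = mat 1 \<and> matrix_inv A ** A = mat 1"
  using assms unfolding invertible_def matrix_inv_def by (rule someI_ex)

lemma matrix_inv_cancel_left: "invertible (A::real^'n^'n) \<Longrightarrow> matrix_inv A *v (A *v x) = x"
  by (metis matrix_inv_mult_both matrix_vector_mul_assoc matrix_vector_mul_lid)

lemma matrix_inv_cancel_right: "invertible (A::real^'n^'n) \<Longrightarrow> A *v (matrix_inv A *v x) = x"
  by (metis matrix_inv_mult_both matrix_vector_mul_assoc matrix_vector_mul_lid)

lemma skew_symmetric_inner_self:
  fixes J :: "real^'n^'n"
  assumes "transpose J = - J"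
  shows "(J *v w) \<bullet> w = 0"
proof -
  have "(J *v w) \<bullet> w = w \<bullet> (J *v w)"
    by (simp add: inner_commute)
  also have "\<dots> = (w v* J) \<bullet> w"
    by (simp add: dot_lmul_matrix)
  also have "w v* J = transpose J *v w"
    by simp
  also have "\<dots> = - (J *v w)"
    using assms by (simp add: matrix_vector_mult_def vec_eq_iff sum_negf)
  finally show ?thesis by simp
qed

lemma strictly_convex_on_imp_convex_on:
  assumes "strictly_convex_on S F"
  shows "convex_on S F"
proof (rule convex_onI)
  show "convex S" using assms unfolding strictly_convex_on_def by simp
  fix t :: real and x y assume "0 < t" "t < 1" "x \<in> S" "y \<in> S"
  with assms show "F ((1 - t) *\<^sub>R x + t *\<^sub>R y) \<le> (1 - t) * F x + t * F y"
    unfolding strictly_convex_on_def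
    by (cases "x = y") (auto simp: algebra_simps intro: less_imp_le)
qed

lemma convex_on_gradient_inequality:
  fixes F :: "'a::real_inner \<Rightarrow> real"
  assumes convex: "convex_on UNIV F" and deriv: "(F has_derivative (\<lambda>h. D \<bullet> h)) (at u)"
  shows "F u + D \<bullet> (v - u) \<le> F v"
proof -
  define g where "g t = F (u + t *\<^sub>R (v - u))" for t :: real
  have "convex_on UNIV g"
  proof (rule convex_onI)
    fix t x y :: real assume "0 < t" "t < 1"
    moreover have "u + ((1 - t) * x + t * y) *\<^sub>R (v - u)
        = (1 - t) *\<^sub>R (u + x *\<^sub>R (v - u)) + t *\<^sub>R (u + y *\<^sub>R (v - u))"
      by (simp add: algebra_simps)
    ultimately show "g ((1 - t) *\<^sub>R x + t *\<^sub>R y) \<le> (1 - t) * g x + t * g y"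
      using convex_onD[OF convex, of t "u + x *\<^sub>R (v - u)" "u + y *\<^sub>R (v - u)"]
      by (simp add: g_def)
  qed simp
  moreover have "(g has_field_derivative (D \<bullet> (v - u))) (at 0)"
  proof -
    have "((\<lambda>t. u + t *\<^sub>R (v - u)) has_derivative (\<lambda>h. h *\<^sub>R (v - u))) (at 0)"
      by (auto intro!: derivative_eq_intros)
    moreover have "(F has_derivative (\<lambda>h. D \<bullet> h)) (at (u + 0 *\<^sub>R (v - u)))"
      using deriv by simp
    ultimately have "(g has_derivative (\<lambda>h. D \<bullet> (h *\<^sub>R (v - u)))) (at 0)"
      unfolding g_def by (rule diff_chain_at[unfolded o_def])
    moreover have "(\<lambda>h. D \<bullet> (h *\<^sub>R (v - u))) = (*) (D \<bullet> (v - u))"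
      by (simp add: fun_eq_iff)
    ultimately show ?thesis
      by (simp add: has_field_derivative_def)
  qed
  ultimately have "g 1 - g 0 \<ge> D \<bullet> (v - u) * (1 - 0)"
    by (intro convex_on_imp_above_tangent) auto
  then show ?thesis by (simp add: g_def)
qed

lemma strictly_convex_on_gradient_inequality:
  fixes F :: "'a::real_inner \<Rightarrow> real"
  assumes sconv: "strictly_convex_on UNIV F" and deriv: "(F has_derivative (\<lambda>h. D \<bullet> h)) (at u)"
    and "v \<noteq> u"
  shows "F u + D \<bullet> (v - u) < F v"
proof -
  have "F (u + t *\<^sub>R (v - u)) < (1 - t) * F u + t * F v" if "0 < t" "t < 1" for t :: real
  proof -
    have "(1 - t) *\<^sub>R u + t *\<^sub>R v = u + t *\<^sub>R (v - u)"
      by (simp add: algebra_simps)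
    with sconv \<open>v \<noteq> u\<close> that show ?thesis
      unfolding strictly_convex_on_def by (metis UNIV_I)
  qed
  from this[of "1/2"]
  have "F (u + (1/2) *\<^sub>R (v - u)) < (1/2) * F u + (1/2) * F v"
    by simp
  moreover have "F u + (1/2) * (D \<bullet> (v - u)) \<le> F (u + (1/2) *\<^sub>R (v - u))"
    using convex_on_gradient_inequality[OF strictly_convex_on_imp_convex_on[OF sconv] deriv,
        of "u + (1/2) *\<^sub>R (v - u)"]
    by simp
  ultimately show ?thesis by simp
qed

lemma strictly_convex_on_gradient_strictly_monotone:
  fixes F :: "'a::real_inner \<Rightarrow> real"
  assumes sconv: "strictly_convex_on UNIV F"
    and grad: "\<And>x. (F has_derivative (\<lambda>h. g x \<bullet> h)) (at x)"
    and "x \<noteq> y"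
  shows "(g x - g y) \<bullet> (x - y) > 0"
proof -
  have "F x + g x \<bullet> (y - x) < F y" "F y + g y \<bullet> (x - y) < F x"
    using strictly_convex_on_gradient_inequality[OF sconv grad] \<open>x \<noteq> y\<close> by auto
  moreover have "g x \<bullet> (y - x) = - (g x \<bullet> (x - y))"
    by (metis inner_minus_right minus_diff_eq)
  ultimately show ?thesis by (simp add: inner_diff_left)
qed

lemma inj_strictly_monotone_minus_skew:
  fixes g :: "real^'n \<Rightarrow> real^'n" and J :: "real^'n^'n"
  assumes mono: "\<And>x y. x \<noteq> y \<Longrightarrow> (g x - g y) \<bullet> (x - y) > 0"
    and skew: "transpose J = - J"
  shows "inj (\<lambda>x. g x - J *v x)"
proof (rule injI, rule ccontr)
  fix x y assume "g x - J *v x = g y - J *v y" "x \<noteq> y"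
  then have "g x - g y = J *v (x - y)"
    by (simp add: matrix_vector_mult_diff_distrib algebra_simps)
  with mono[OF \<open>x \<noteq> y\<close>] show False
    by (simp add: skew_symmetric_inner_self[OF skew])
qed

lemma steady_state_io_in_graph:
  fixes gpsi :: "real^'n \<Rightarrow> real^'n" and J B C :: "real^'n^'n"
  assumes inj: "inj (\<lambda>x. gpsi x - J *v x)"
    and invB: "invertible B" and invC: "invertible C"
    and io: "(u, y) \<in> steady_state_io gpsi J B C rho"
  shows "y = inv (\<lambda>y. matrix_inv B *v gpsi (matrix_inv C *v y)
                      - matrix_inv B *v (J *v (matrix_inv C *v y))) u + rho u"
    (is "y = inv ?G u + rho u")
proof -
  have G_eq: "?G = (\<lambda>z. matrix_inv B *v z) \<circ> (\<lambda>x. gpsi x - J *v x) \<circ> (\<lambda>y. matrix_inv C *v y)"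
    by (simp add: fun_eq_iff matrix_vector_mult_diff_distrib)
  have "inj (\<lambda>z. matrix_inv B *v z)" "inj (\<lambda>y. matrix_inv C *v y)"
    by (metis injI matrix_inv_cancel_right invB invC)+
  with inj have "inj ?G"
    unfolding G_eq by (intro inj_compose)
  obtain x where "- gpsi x + J *v x + B *v u = 0" and y: "y = C *v x + rho u"
    using io unfolding steady_state_io_def by blast
  then have "gpsi x - J *v x = B *v u"
    by (simp add: algebra_simps)
  moreover have "?G (C *v x) = matrix_inv B *v (gpsi x - J *v x)"
    by (simp only: matrix_inv_cancel_left[OF invC] matrix_vector_mult_diff_distrib)
  ultimately have "?G (C *v x) = u"
    by (simp only: matrix_inv_cancel_left[OF invB])
  then have "inv ?G u = C *v x"
    by (rule inv_f_eq[OF \<open>inj ?G\<close>])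
  with y show ?thesis by simp
qed

definition cyc_pred :: "nat \<Rightarrow> nat \<Rightarrow> nat" where
  "cyc_pred N i = (if i = 1 then N else i - 1)"

lemma cyc_sum_cyc_pred: "cyc_sum N u y = (\<Sum>i=1..N. y i \<bullet> (u i - u (cyc_pred N i)))"
  unfolding cyc_sum_def cyc_pred_def ..

lemma sum_cyc_pred:
  fixes f :: "nat \<Rightarrow> 'a::comm_monoid_add"
  assumes "N \<ge> 1"
  shows "(\<Sum>i=1..N. f (cyc_pred N i)) = (\<Sum>i=1..N. f i)"
proof -
  obtain m where N: "N = Suc m" using assms by (cases N) auto
  have "(\<Sum>i=1..N. f (cyc_pred N i)) = f N + (\<Sum>i=Suc 1..Suc m. f (i - 1))"
    unfolding N cyc_pred_def atLeastAtMostSuc_conv[symmetric]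
    by (subst sum.atLeast_Suc_atMost) (auto intro!: sum.cong)
  also have "\<dots> = f N + (\<Sum>i=1..m. f i)"
    by (subst sum.shift_bounds_cl_Suc_ivl) simp
  finally show ?thesis by (simp add: N add.commute)
qed

lemma cyc_pred_eq_imp_constant:
  assumes "\<And>i. i \<in> {1..N} \<Longrightarrow> u (cyc_pred N i) = u i"
    and "i \<in> {1..N}"
  shows "u i = u 1"
  using assms(2)
proof (induction i)
  case (Suc k)
  then show ?case
    using assms(1)[of "Suc k"] by (cases "k = 0") (auto simp: cyc_pred_def)
qed simp

lemma cyc_sum_nonneg_of_potential:
  fixes F :: "'a::real_inner \<Rightarrow> real"
  assumes "N \<ge> 1"
    and le: "\<And>i. i \<in> {1..N} \<Longrightarrow>
      F (u i) - F (u (cyc_pred N i)) \<le> y i \<bullet> (u i - u (cyc_pred N i))"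
  shows "cyc_sum N u y \<ge> 0"
proof -
  have "0 = (\<Sum>i=1..N. F (u i) - F (u (cyc_pred N i)))"
    using sum_cyc_pred[OF \<open>N \<ge> 1\<close>, of "\<lambda>i. F (u i)"] by (simp add: sum_subtractf)
  also have "\<dots> \<le> cyc_sum N u y"
    unfolding cyc_sum_cyc_pred by (intro sum_mono le)
  finally show ?thesis .
qed

lemma cyc_sum_pos_of_potential:
  fixes F :: "'a::real_inner \<Rightarrow> real"
  assumes "N \<ge> 1"
    and "\<And>i. i \<in> {1..N} \<Longrightarrow>
      F (u i) - F (u (cyc_pred N i)) \<le> y i \<bullet> (u i - u (cyc_pred N i))"
    and "k \<in> {1..N}" and "F (u k) - F (u (cyc_pred N k)) < y k \<bullet> (u k - u (cyc_pred N k))"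
  shows "cyc_sum N u y > 0"
proof -
  have "0 = (\<Sum>i=1..N. F (u i) - F (u (cyc_pred N i)))"
    using sum_cyc_pred[OF \<open>N \<ge> 1\<close>, of "\<lambda>i. F (u i)"] by (simp add: sum_subtractf)
  also have "\<dots> < cyc_sum N u y"
    unfolding cyc_sum_cyc_pred using assms by (intro sum_strict_mono_ex1) auto
  finally show ?thesis .
qed

lemma cyclically_monotone_gradient_graph:
  fixes F :: "'a::real_inner \<Rightarrow> real"
  assumes convex: "convex_on UNIV F"
    and grad: "\<And>u. (F has_derivative (\<lambda>h. G u \<bullet> h)) (at u)"
    and graph: "\<And>u y. (u, y) \<in> R \<Longrightarrow> y = G u"
  shows "cyclically_monotone R"
  unfolding cyclically_monotone_def
proof (intro allI impI)
  fix N :: nat and u y assume "N \<ge> 1" and R: "\<forall>i\<in>{1..N}. (u i, y i) \<in> R"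
  show "cyc_sum N u y \<ge> 0"
  proof (rule cyc_sum_nonneg_of_potential[OF \<open>N \<ge> 1\<close>])
    fix i assume "i \<in> {1..N}"
    with R graph have "y i = G (u i)" by blast
    with convex_on_gradient_inequality[OF convex grad, of "u i" "u (cyc_pred N i)"]
    show "F (u i) - F (u (cyc_pred N i)) \<le> y i \<bullet> (u i - u (cyc_pred N i))"
      by (simp add: inner_diff_right)
  qed
qed

lemma strictly_cyclically_monotone_gradient_graph:
  fixes F :: "'a::real_inner \<Rightarrow> real"
  assumes sconv: "strictly_convex_on UNIV F"
    and grad: "\<And>u. (F has_derivative (\<lambda>h. G u \<bullet> h)) (at u)"
    and graph: "\<And>u y. (u, y) \<in> R \<Longrightarrow> y = G u"
  shows "strictly_cyclically_monotone R"
  unfolding strictly_cyclically_monotone_def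
proof (intro allI impI)
  fix N :: nat and u y
  assume "N \<ge> 1" and R: "\<forall>i\<in>{1..N}. (u i, y i) \<in> R"
    and nonconst: "\<exists>i\<in>{1..N}. \<exists>j\<in>{1..N}. u i \<noteq> u j"
  have y: "y i = G (u i)" if "i \<in> {1..N}" for i
    using R graph that by blast
  obtain k where k: "k \<in> {1..N}" "u (cyc_pred N k) \<noteq> u k"
    using nonconst cyc_pred_eq_imp_constant[of N u] by metis
  show "cyc_sum N u y > 0"
  proof (rule cyc_sum_pos_of_potential[OF \<open>N \<ge> 1\<close> _ k(1)])
    fix i assume "i \<in> {1..N}"
    with convex_on_gradient_inequality[OF strictly_convex_on_imp_convex_on[OF sconv] grad,
        of "u i" "u (cyc_pred N i)"] y
    show "F (u i) - F (u (cyc_pred N i)) \<le> y i \<bullet> (u i - u (cyc_pred N i))"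
      by (simp add: inner_diff_right)
  next
    from strictly_convex_on_gradient_inequality[OF sconv grad k(2)] y[OF k(1)]
    show "F (u k) - F (u (cyc_pred N k)) < y k \<bullet> (u k - u (cyc_pred N k))"
      by (simp add: inner_diff_right)
  qed
qed

theorem mainTheorem12:
  fixes psi :: "real^'n \<Rightarrow> real"
    and gpsi :: "real^'n \<Rightarrow> real^'n"
    and J B C :: "real^'n^'n"
    and rho :: "real^'n \<Rightarrow> real^'n"
  assumes grad: "\<And>x. (psi has_derivative (\<lambda>h. gpsi x \<bullet> h)) (at x)"
    and cont: "continuous_on UNIV gpsi"
    and sconv: "strictly_convex_on UNIV psi"
    and coerc: "filterlim (\<lambda>x. psi x / norm x) at_top at_infinity"
    and skew: "transpose J = - J"
    and invB: "invertible B"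
    and invC: "invertible C"
  defines "Phi \<equiv> inv (\<lambda>y. matrix_inv B *v gpsi (matrix_inv C *v y)
                          - matrix_inv B *v (J *v (matrix_inv C *v y)))"
  shows "((\<exists>F. convex_on UNIV F \<and> (\<forall>u. (F has_derivative (\<lambda>h. (Phi u + rho u) \<bullet> h)) (at u)))
            \<longrightarrow> cyclically_monotone (steady_state_io gpsi J B C rho))
       \<and> ((\<exists>F. strictly_convex_on UNIV F \<and> (\<forall>u. (F has_derivative (\<lambda>h. (Phi u + rho u) \<bullet> h)) (at u)))
            \<longrightarrow> strictly_cyclically_monotone (steady_state_io gpsi J B C rho))"
proof -
  have "inj (\<lambda>x. gpsi x - J *v x)"
    using strictly_convex_on_gradient_strictly_monotone[OF sconv grad] skew
    by (rule inj_strictly_monotone_minus_skew)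
  then have graph: "y = Phi u + rho u" if "(u, y) \<in> steady_state_io gpsi J B C rho" for u y
    unfolding Phi_def using invB invC that by (rule steady_state_io_in_graph)
  show ?thesis
  proof (intro conjI impI; elim exE conjE)
    fix F assume "convex_on UNIV F" "\<forall>u. (F has_derivative (\<lambda>h. (Phi u + rho u) \<bullet> h)) (at u)"
    then show "cyclically_monotone (steady_state_io gpsi J B C rho)"
      using graph by (intro cyclically_monotone_gradient_graph) auto
  next
    fix F assume "strictly_convex_on UNIV F" "\<forall>u. (F has_derivative (\<lambda>h. (Phi u + rho u) \<bullet> h)) (at u)"
    then show "strictly_cyclically_monotone (steady_state_io gpsi J B C rho)"
      using graph by (intro strictly_cyclically_monotone_gradient_graph) auto
  qed
qed

end
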